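(* Let $p$ be a prime, $k\ge1$, and $g\in{\rm AGL}(k,p)$, acting on $\mathbb F_p^k$, written as $g(x)=Ax+e$ with $A\in{\rm GL}(k,p)$ and $e\in\mathbb F_p^k$. Then $g$ is an imprimitive permutation of $\mathbb F_p^k$ if and only if the characteristic polynomial of $A$ is reducible over $\mathbb F_p$.
   Context: A permutation $g$ of a finite set $\Omega$ with $|\Omega|=n$ is called imprimitive if it preserves a partition of $\Omega$ into blocks of equal size $m$ with $1<m<n$ (equivalently, it lies in a transitive imprimitive subgroup of ${\rm Sym}(\Omega)$); otherwise it is primitive. *)

theory Defs
  imports "Berlekamp_Zassenhaus.Finite_Field" "Jordan_Normal_Form.Char_Poly" "HOL-Library.Disjoint_Sets"
begin

definition imprimitive_perm :: "('a \<Rightarrow> 'a) \<Rightarrow> 'a set \<Rightarrow> bool" where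
  "imprimitive_perm g \<Omega> \<longleftrightarrow>
     (\<exists>P m. partition_on \<Omega> P \<and> (\<forall>B\<in>P. card B = m) \<and> 1 < m \<and> m < card \<Omega>
            \<and> (\<forall>B\<in>P. g ` B \<in> P))"

end

theory Submission
  imports Defs "Berlekamp_Zassenhaus.Distinct_Degree_Factorization" "HOL-Algebra.Multiplicative_Group"
begin

text \<open>
  Let \<open>\<chi>\<close> be the characteristic polynomial of \<open>A\<close> and \<open>g x = A x + e\<close>.

  If \<open>\<chi> = f h\<close> with factors of positive degree, then by Cayley--Hamilton \<open>f(A)\<close> or \<open>h(A)\<close> is
  singular, so some \<open>v \<noteq> 0\<close> is annihilated by a polynomial \<open>q\<close> with \<open>0 < deg q < k\<close>. The
  cyclic subspace \<open>W = {r(A) v}\<close> is \<open>A\<close>-invariant and has between \<open>2\<close> and \<open>p^(deg q)\<close>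
  elements, so its cosets form a block system for \<open>g\<close>.

  If \<open>\<chi>\<close> is irreducible, then \<open>r(A) v = 0\<close> with \<open>v \<noteq> 0\<close> forces \<open>\<chi> | r\<close>, so \<open>A\<close> permutes
  the nonzero vectors in orbits that all have the length of the order of \<open>A\<close>. Blocks would have
  size \<open>p^j\<close> with \<open>0 < j < k\<close>; then \<open>k \<ge> 2\<close>, so \<open>A\<close> has no eigenvalue and \<open>g\<close> has a fixed
  point \<open>f\<close>. The block \<open>B\<close> through \<open>f\<close> is \<open>g\<close>-invariant, so \<open>(B - f) - {0}\<close> is a union of
  \<open>A\<close>-orbits with \<open>p^j - 1\<close> elements, whence \<open>A^(p^j) = A\<close> and \<open>\<chi>\<close> divides \<open>x^(p^j) - x\<close>,
  which an irreducible polynomial of degree \<open>k > j\<close> does not.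
\<close>

section \<open>Evaluating polynomials at square matrices\<close>

definition poly_mat :: "'a::comm_ring_1 mat \<Rightarrow> 'a poly \<Rightarrow> 'a mat" where
  "poly_mat A p = fold_coeffs (\<lambda>a M. a \<cdot>\<^sub>m 1\<^sub>m (dim_row A) + A * M) p (0\<^sub>m (dim_row A) (dim_row A))"

lemma mult_mat_vec_zero [simp]: "B \<in> carrier_mat m n \<Longrightarrow> B *\<^sub>v 0\<^sub>v n = 0\<^sub>v m"
  by (intro eq_vecI) auto

lemma zero_mult_mat_vec [simp]: "v \<in> carrier_vec n \<Longrightarrow> 0\<^sub>m m n *\<^sub>v v = 0\<^sub>v m"
  by (intro eq_vecI) auto

context
  fixes n :: nat and A :: "'a::comm_ring_1 mat"
  assumes A: "A \<in> carrier_mat n n"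
begin

lemma poly_mat_0 [simp]: "poly_mat A 0 = 0\<^sub>m n n"
  using A by (simp add: poly_mat_def)

lemma poly_mat_pCons: "poly_mat A (pCons a p) = a \<cdot>\<^sub>m 1\<^sub>m n + A * poly_mat A p"
proof (cases "p = 0 \<and> a = 0")
  case True
  then show ?thesis using A by (auto intro!: eq_matI)
next
  case False
  then show ?thesis using A by (auto simp: poly_mat_def)
qed

lemma poly_mat_carrier [simp]: "poly_mat A p \<in> carrier_mat n n"
  by (induct p) (use A in \<open>auto simp: poly_mat_pCons\<close>)

lemma poly_mat_dim [simp]: "dim_row (poly_mat A p) = n" "dim_col (poly_mat A p) = n"
  using poly_mat_carrier[of p] unfolding carrier_mat_def by blast+

lemma poly_mat_add: "poly_mat A (p + q) = poly_mat A p + poly_mat A q"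
proof (induct p arbitrary: q)
  case (pCons a p q)
  obtain b q' where q: "q = pCons b q'" by (cases q)
  have "poly_mat A (pCons a p + q) = (a + b) \<cdot>\<^sub>m 1\<^sub>m n + (A * poly_mat A p + A * poly_mat A q')"
    by (simp add: q poly_mat_pCons pCons(2) mult_add_distrib_mat[OF A poly_mat_carrier poly_mat_carrier])
  also have "\<dots> = poly_mat A (pCons a p) + poly_mat A q"
    unfolding q poly_mat_pCons using A by (intro eq_matI) (auto simp: algebra_simps)
  finally show ?case .
qed (use A in \<open>auto intro!: eq_matI\<close>)

lemma poly_mat_smult: "poly_mat A (smult c p) = c \<cdot>\<^sub>m poly_mat A p"
proof (induct p)
  case (pCons a p)
  have "poly_mat A (smult c (pCons a p)) = (c * a) \<cdot>\<^sub>m 1\<^sub>m n + c \<cdot>\<^sub>m (A * poly_mat A p)"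
    by (simp add: poly_mat_pCons pCons(2) mult_smult_distrib[OF A poly_mat_carrier])
  also have "\<dots> = c \<cdot>\<^sub>m poly_mat A (pCons a p)"
    unfolding poly_mat_pCons using A by (intro eq_matI) (auto simp: algebra_simps)
  finally show ?case .
qed (use A in \<open>auto intro!: eq_matI\<close>)

lemma poly_mat_mult: "poly_mat A (p * q) = poly_mat A p * poly_mat A q"
proof (induct p)
  case (pCons a p)
  have "poly_mat A (pCons a p * q) = a \<cdot>\<^sub>m poly_mat A q + (A * poly_mat A p) * poly_mat A q"
    by (simp add: poly_mat_pCons pCons(2) poly_mat_add poly_mat_smult
        assoc_mult_mat[OF A poly_mat_carrier poly_mat_carrier])
      (use A in \<open>auto intro!: eq_matI\<close>)
  also have "\<dots> = poly_mat A (pCons a p) * poly_mat A q"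
    unfolding poly_mat_pCons using A
    by (subst add_mult_distrib_mat[of _ n n]) (auto simp: mult_smult_assoc_mat[of _ n n _ n])
  finally show ?case .
qed (use A in auto)

lemma poly_mat_1: "poly_mat A 1 = 1\<^sub>m n"
proof -
  have "poly_mat A 1 = 1 \<cdot>\<^sub>m 1\<^sub>m n + A * 0\<^sub>m n n"
    using poly_mat_pCons[of 1 0] by simp
  then show ?thesis
    using A by (auto intro!: eq_matI)
qed

lemma poly_mat_X: "poly_mat A [:0, 1:] = A"
proof -
  have "poly_mat A [:0, 1:] = 0 \<cdot>\<^sub>m 1\<^sub>m n + A"
    using A by (simp add: poly_mat_pCons poly_mat_1)
  then show ?thesis
    using A by (auto intro!: eq_matI)
qed

lemma poly_mat_diff: "poly_mat A (p - q) = poly_mat A p - poly_mat A q"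
proof -
  have "poly_mat A (p - q) = poly_mat A (p + smult (-1) q)" by simp
  also have "\<dots> = poly_mat A p + (-1) \<cdot>\<^sub>m poly_mat A q" by (simp only: poly_mat_add poly_mat_smult)
  also have "\<dots> = poly_mat A p - poly_mat A q" using A by (intro eq_matI) auto
  finally show ?thesis .
qed

lemma poly_mat_power: "poly_mat A (p ^ i) = poly_mat A p ^\<^sub>m i"
  by (induct i) (simp_all add: poly_mat_1 poly_mat_mult power_Suc2 del: power_Suc)

lemma pow_mat_add: "A ^\<^sub>m (i + j) = A ^\<^sub>m i * A ^\<^sub>m j"
proof -
  interpret ring "ring_mat TYPE('a) n ()" by (rule ring_mat)
  show ?thesis
    using nat_pow_mult[of A i j] A by (simp add: pow_mat_ring_pow[OF A, where b = "()"] ring_mat_simps)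
qed

lemma pow_mat_Suc_left: "A ^\<^sub>m Suc i = A * A ^\<^sub>m i"
  using pow_mat_add[of 1 i] A by simp

lemma index_pow_mat_Suc:
  assumes "a < n" "b < n"
  shows "(A ^\<^sub>m Suc i) $$ (a, b) = (\<Sum>t<n. A $$ (a, t) * (A ^\<^sub>m i) $$ (t, b))"
  unfolding pow_mat_Suc_left using A assms
  by (simp add: scalar_prod_def lessThan_atLeast0 del: pow_mat.simps(2))

lemma index_poly_mat:
  assumes "i < n" "j < n" "\<forall>l\<ge>N. coeff p l = 0"
  shows "poly_mat A p $$ (i, j) = (\<Sum>l<N. coeff p l * (A ^\<^sub>m l) $$ (i, j))"
  using assms
proof (induct p arbitrary: N i)
  case (pCons a p N i)
  show ?case
  proof (cases N)
    case 0
    with pCons(5) have "pCons a p = 0" by (intro poly_eqI) auto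
    with pCons(1) show ?thesis by auto
  next
    case (Suc N')
    have IH: "poly_mat A p $$ (t, j) = (\<Sum>l<N'. coeff p l * (A ^\<^sub>m l) $$ (t, j))" if "t < n" for t
      using pCons(2)[OF that pCons(4)] pCons(5) Suc by (metis Suc_le_mono coeff_pCons_Suc)
    have "poly_mat A (pCons a p) $$ (i, j) = a * 1\<^sub>m n $$ (i, j) + (\<Sum>t<n. A $$ (i, t) * poly_mat A p $$ (t, j))"
      using A pCons(3,4) by (simp add: poly_mat_pCons scalar_prod_def lessThan_atLeast0)
    also have "(\<Sum>t<n. A $$ (i, t) * poly_mat A p $$ (t, j))
        = (\<Sum>l<N'. \<Sum>t<n. A $$ (i, t) * (coeff p l * (A ^\<^sub>m l) $$ (t, j)))"
      by (simp add: IH sum_distrib_left sum.swap[of _ "{..<n}"])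
    also have "\<dots> = (\<Sum>l<N'. coeff p l * (A ^\<^sub>m Suc l) $$ (i, j))"
      using pCons(3,4) by (intro sum.cong refl)
        (simp add: index_pow_mat_Suc sum_distrib_left algebra_simps del: pow_mat.simps(2))
    finally show ?thesis
      unfolding Suc sum.lessThan_Suc_shift using A pCons(3,4) by simp
  qed
qed simp

lemma coeff_adj_char_poly_matrix:
  fixes M defines "M \<equiv> adj_mat (char_poly_matrix A)"
  assumes ab: "a < n" "b < n"
  shows "(if a = b then coeff (char_poly A) l else 0) =
    (if l = 0 then 0 else coeff (M $$ (a, b)) (l - 1)) - (\<Sum>t<n. coeff (M $$ (a, t)) l * A $$ (t, b))"
proof -
  let ?C = "char_poly_matrix A"
  have C: "?C \<in> carrier_mat n n" using A by simp
  have M: "M \<in> carrier_mat n n" unfolding M_def using adj_mat(1)[OF C] .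
  have C_index: "?C $$ (t, b) = (if t = b then [:0, 1:] else 0) - [:A $$ (t, b):]" if "t < n" for t
    unfolding char_poly_matrix_def using A that ab by auto
  have "(M * ?C) $$ (a, b) = (\<Sum>t<n. M $$ (a, t) * ?C $$ (t, b))"
    using M C ab by (simp add: scalar_prod_def lessThan_atLeast0)
  also have "\<dots> = (\<Sum>t<n. (if t = b then pCons 0 (M $$ (a, t)) else 0) - smult (A $$ (t, b)) (M $$ (a, t)))"
    by (intro sum.cong refl) (simp add: C_index right_diff_distrib mult.commute[of "M $$ (a, _)"])
  also have "\<dots> = pCons 0 (M $$ (a, b)) - (\<Sum>t<n. smult (A $$ (t, b)) (M $$ (a, t)))"
    using ab by (simp add: sum_subtractf)
  finally have "coeff ((M * ?C) $$ (a, b)) l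
      = coeff (pCons 0 (M $$ (a, b))) l - (\<Sum>t<n. A $$ (t, b) * coeff (M $$ (a, t)) l)"
    by (simp add: coeff_sum)
  moreover have "(M * ?C) $$ (a, b) = (if a = b then char_poly A else 0)"
    using adj_mat(3)[OF C] ab unfolding M_def char_poly_def by simp
  ultimately show ?thesis
    by (cases l) (auto simp: mult.commute)
qed

lemma char_poly_coeff_telescope:
  fixes a b :: nat and M U
  defines "M \<equiv> adj_mat (char_poly_matrix A)"
  assumes a: "a < n" and b: "b < n"
    and U_def: "\<And>l. U l = (\<Sum>s<n. (if l = 0 then 0 else coeff (M $$ (a, s)) (l - 1)) * (A ^\<^sub>m l) $$ (s, b))"
  shows "coeff (char_poly A) l * (A ^\<^sub>m l) $$ (a, b) = U l - U (Suc l)"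
proof -
  have "coeff (char_poly A) l * (A ^\<^sub>m l) $$ (a, b)
      = (\<Sum>s<n. (if a = s then coeff (char_poly A) l else 0) * (A ^\<^sub>m l) $$ (s, b))"
    using a by (simp add: if_distrib if_distribR cong: if_cong)
  also have "\<dots> = (\<Sum>s<n. ((if l = 0 then 0 else coeff (M $$ (a, s)) (l - 1))
      - (\<Sum>t<n. coeff (M $$ (a, t)) l * A $$ (t, s))) * (A ^\<^sub>m l) $$ (s, b))"
    by (intro sum.cong refl) (simp add: coeff_adj_char_poly_matrix[OF a, folded M_def])
  also have "\<dots> = U l - (\<Sum>s<n. \<Sum>t<n. coeff (M $$ (a, t)) l * A $$ (t, s) * (A ^\<^sub>m l) $$ (s, b))"
    unfolding U_def by (simp add: left_diff_distrib sum_subtractf sum_distrib_right)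
  also have "(\<Sum>s<n. \<Sum>t<n. coeff (M $$ (a, t)) l * A $$ (t, s) * (A ^\<^sub>m l) $$ (s, b))
      = (\<Sum>t<n. coeff (M $$ (a, t)) l * (\<Sum>s<n. A $$ (t, s) * (A ^\<^sub>m l) $$ (s, b)))"
    by (subst sum.swap) (simp add: sum_distrib_left mult.assoc)
  also have "\<dots> = U (Suc l)"
    unfolding U_def using b by (intro sum.cong refl) (simp add: index_pow_mat_Suc del: pow_mat.simps(2))
  finally show ?thesis .
qed

text \<open>Comparing coefficients in \<open>adj(xI - A) (xI - A) = \<chi>(x) I\<close> makes the sum
  \<open>\<Sum>\<^sub>l \<chi>\<^sub>l A\<^sup>l\<close> telescope.\<close>

theorem Cayley_Hamilton: "poly_mat A (char_poly A) = 0\<^sub>m n n"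
proof (rule eq_matI)
  define M where "M = adj_mat (char_poly_matrix A)"
  fix a b assume "a < dim_row (0\<^sub>m n n :: 'a mat)" and "b < dim_col (0\<^sub>m n n :: 'a mat)"
  then have a: "a < n" and b: "b < n" by auto
  define U where "U l = (\<Sum>s<n. (if l = 0 then 0 else coeff (M $$ (a, s)) (l - 1)) * (A ^\<^sub>m l) $$ (s, b))" for l
  define D where "D = (\<Sum>s<n. degree (M $$ (a, s)))"
  define N where "N = Suc (Suc (n + D))"
  have "degree (M $$ (a, s)) \<le> D" if "s < n" for s
    unfolding D_def by (rule member_le_sum) (use that in auto)
  then have "coeff (M $$ (a, s)) (Suc (n + D)) = 0" if "s < n" for s
    using that by (intro coeff_eq_0) (simp add: le_imp_less_Suc trans_le_add2)
  then have UN: "U N = 0"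
    unfolding U_def N_def by simp
  have "\<forall>l\<ge>N. coeff (char_poly A) l = 0"
    using degree_monic_char_poly[OF A] unfolding N_def by (auto intro: coeff_eq_0)
  then have "poly_mat A (char_poly A) $$ (a, b) = (\<Sum>l<N. U l - U (Suc l))"
    by (simp add: index_poly_mat[OF a b] char_poly_coeff_telescope[OF a b, folded M_def, OF U_def])
  also have "\<dots> = 0"
    unfolding sum_lessThan_telescope' UN by (simp add: U_def)
  finally show "poly_mat A (char_poly A) $$ (a, b) = 0\<^sub>m n n $$ (a, b)"
    using a b by simp
qed (use A in auto)

end

lemma poly_mat_eq_0_if_char_poly_dvd:
  fixes A :: "'a::comm_ring_1 mat"
  assumes A: "A \<in> carrier_mat n n" and "char_poly A dvd r"
  shows "poly_mat A r = 0\<^sub>m n n"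
proof -
  obtain s where "r = char_poly A * s" using assms(2) by (elim dvdE)
  then show ?thesis using A by (simp add: poly_mat_mult Cayley_Hamilton)
qed

section \<open>Matrices with irreducible characteristic polynomial\<close>

context
  fixes n :: nat and A :: "'a::field_gcd mat"
  assumes A: "A \<in> carrier_mat n n" and irr: "irreducible (char_poly A)"
begin

lemma char_poly_dvd_if_poly_mat_kernel:
  assumes v: "v \<in> carrier_vec n" "v \<noteq> 0\<^sub>v n" and r: "poly_mat A r *\<^sub>v v = 0\<^sub>v n"
  shows "char_poly A dvd r"
proof (rule ccontr)
  assume "\<not> char_poly A dvd r"
  then have "gcd (char_poly A) r = 1"
    using irr by (metis coprime_imp_gcd_eq_1 irreducible_imp_prime_elem prime_elem_imp_coprime)
  then obtain u w where "u * char_poly A + w * r = 1"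
    by (metis bezout_coefficients_fst_snd)
  then have "poly_mat A u * poly_mat A (char_poly A) + poly_mat A w * poly_mat A r = 1\<^sub>m n"
    using A by (metis poly_mat_1 poly_mat_add poly_mat_mult)
  then have "poly_mat A w * poly_mat A r = 1\<^sub>m n"
    using A by (simp add: Cayley_Hamilton mult_carrier_mat[OF poly_mat_carrier[OF A] poly_mat_carrier[OF A]])
  then have "v = poly_mat A w *\<^sub>v (poly_mat A r *\<^sub>v v)"
    using A v by (metis assoc_mult_mat_vec one_mult_mat_vec poly_mat_carrier)
  with v r A show False by simp
qed

lemma char_poly_dvd_if_poly_mat_eq_0:
  assumes "0 < n" and "poly_mat A r = 0\<^sub>m n n"
  shows "char_poly A dvd r"
proof (rule char_poly_dvd_if_poly_mat_kernel)
  show "unit_vec n 0 \<noteq> 0\<^sub>v n"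
    using arg_cong[of _ _ "\<lambda>v. v $ 0"] \<open>0 < n\<close> by force
qed (use assms in auto)

lemma pow_mat_eq_one_if_fixed_vector:
  assumes v: "v \<in> carrier_vec n" "v \<noteq> 0\<^sub>v n" and fixed: "A ^\<^sub>m t *\<^sub>v v = v"
  shows "A ^\<^sub>m t = 1\<^sub>m n"
proof -
  let ?r = "[:0, 1:] ^ t - 1"
  have r: "poly_mat A ?r = A ^\<^sub>m t - 1\<^sub>m n"
    using A by (simp only: poly_mat_diff poly_mat_power poly_mat_X poly_mat_1)
  have "poly_mat A ?r *\<^sub>v v = 0\<^sub>v n"
    unfolding r using A v fixed by (simp add: minus_mult_distrib_mat_vec[of _ n n])
  then have "poly_mat A ?r = 0\<^sub>m n n"
    by (intro poly_mat_eq_0_if_char_poly_dvd[OF A] char_poly_dvd_if_poly_mat_kernel[OF v])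
  then have zero: "A ^\<^sub>m t - 1\<^sub>m n = 0\<^sub>m n n" unfolding r .
  have "A ^\<^sub>m t = (A ^\<^sub>m t - 1\<^sub>m n) + 1\<^sub>m n"
    using A by (intro eq_matI) auto
  then show ?thesis unfolding zero by simp
qed

end

lemma no_eigenvalue_if_irreducible_char_poly:
  fixes A :: "'a::field mat"
  assumes A: "A \<in> carrier_mat n n" and irr: "irreducible (char_poly A)" and n: "2 \<le> n"
  shows "\<not> eigenvalue A a"
proof
  assume "eigenvalue A a"
  then have "poly (char_poly A) a = 0"
    by (simp add: eigenvalue_root_char_poly[OF A])
  then have "[:-a, 1:] dvd char_poly A"
    by (simp only: poly_eq_0_iff_dvd)
  moreover have "\<not> is_unit [:-a, 1:]"
    by (simp add: is_unit_iff_degree)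
  ultimately have "char_poly A dvd [:-a, 1:]"
    using irreducibleD'[OF irr] by blast
  then have "degree (char_poly A) \<le> degree [:-a, 1:]"
    by (rule dvd_imp_degree_le) simp
  with degree_monic_char_poly[OF A] n show False by simp
qed

section \<open>Orbits of uniform length\<close>

lemma funpow_in_invariant_set: "h ` X \<subseteq> X \<Longrightarrow> x \<in> X \<Longrightarrow> (h ^^ t) x \<in> X"
  by (induct t) auto

lemma funpow_add_apply: "(h ^^ (i + j)) x = (h ^^ i) ((h ^^ j) x)"
  by (simp add: funpow_add)

context
  fixes h :: "'a \<Rightarrow> 'a" and X :: "'a set" and d :: nat
  assumes hX: "h ` X \<subseteq> X"
    and period: "\<And>x t. x \<in> X \<Longrightarrow> (h ^^ t) x = x \<longleftrightarrow> d dvd t"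
begin

lemma period_dvd_if_funpow_eq:
  assumes "x \<in> X" "i < j" "(h ^^ i) x = (h ^^ j) x"
  shows "d dvd (j - i)"
proof -
  have "(h ^^ (j - i)) ((h ^^ i) x) = (h ^^ j) x"
    using assms(2) by (simp flip: funpow_add_apply)
  then have "(h ^^ (j - i)) ((h ^^ i) x) = (h ^^ i) x"
    by (simp only: assms(3))
  then show ?thesis using period[OF funpow_in_invariant_set[OF hX assms(1)]] by simp
qed

lemma uniform_period_neq_0:
  assumes "finite X" "x \<in> X"
  shows "d \<noteq> 0"
proof
  assume "d = 0"
  then have "inj_on (\<lambda>i. (h ^^ i) x) {..card X}"
    using period_dvd_if_funpow_eq[OF \<open>x \<in> X\<close>]
    by (intro inj_onI) (metis linorder_neqE_nat dvd_0_left_iff zero_less_diff less_irrefl)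
  moreover have "(\<lambda>i. (h ^^ i) x) ` {..card X} \<subseteq> X"
    using funpow_in_invariant_set[OF hX \<open>x \<in> X\<close>] by auto
  ultimately have "card {..card X} \<le> card X"
    using \<open>finite X\<close> by (rule card_inj_on_le)
  then show False by simp
qed

lemma dvd_card_if_uniform_period:
  assumes "finite X"
  shows "d dvd card X"
proof (cases "X = {}")
  case False
  then have "d \<noteq> 0" using uniform_period_neq_0[OF \<open>finite X\<close>] by blast
  define orb where "orb x = (\<lambda>i. (h ^^ i) x) ` {..<d}" for x
  have funpow_mod: "(h ^^ t) x = (h ^^ (t mod d)) x" if "x \<in> X" for x t
  proof -
    have "(h ^^ t) x = (h ^^ (t mod d)) ((h ^^ (d * (t div d))) x)"
      by (simp flip: funpow_add_apply)
    also have "(h ^^ (d * (t div d))) x = x" using period[OF that] by simp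
    finally show ?thesis .
  qed
  have in_orb: "(h ^^ t) x \<in> orb x" if "x \<in> X" for x t
    unfolding orb_def using \<open>d \<noteq> 0\<close> funpow_mod[OF that, of t]
    by (intro image_eqI[where x = "t mod d"]) auto
  have orb_X: "orb x \<subseteq> X" if "x \<in> X" for x
    unfolding orb_def using funpow_in_invariant_set[OF hX that] by auto
  have card_orb: "card (orb x) = d" if "x \<in> X" for x
  proof -
    have "\<not> d dvd (j - i)" if "i < j" "j < d" for i j
      using that by (auto dest!: dvd_imp_le)
    then have "inj_on (\<lambda>i. (h ^^ i) x) {..<d}"
      using period_dvd_if_funpow_eq[OF \<open>x \<in> X\<close>] by (intro inj_onI) (metis lessThan_iff linorder_neqE_nat)
    then show ?thesis unfolding orb_def by (simp add: card_image)
  qed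
  have orb_eq: "orb y = orb x" if x: "x \<in> X" and y_orb: "y \<in> orb x" for x y
  proof -
    obtain i where y: "y = (h ^^ i) x" using y_orb unfolding orb_def by auto
    have "orb y \<subseteq> orb x"
      using in_orb[OF x] by (auto simp: orb_def y simp flip: funpow_add_apply)
    moreover have "finite (orb x)" unfolding orb_def by simp
    ultimately show ?thesis
      using card_orb x funpow_in_invariant_set[OF hX] y by (intro card_subset_eq) auto
  qed
  have "\<Union> (orb ` X) = X"
    using orb_X in_orb[where t = 0] by auto
  moreover have "d dvd card (\<Union> (orb ` X))"
  proof (rule dvd_partition)
    show "finite (\<Union> (orb ` X))" using orb_X \<open>finite X\<close> by (meson UN_least finite_subset)
    show "\<forall>c\<in>orb ` X. d dvd card c" using card_orb by auto
    show "\<forall>c1\<in>orb ` X. \<forall>c2\<in>orb ` X. c1 \<noteq> c2 \<longrightarrow> c1 \<inter> c2 = {}"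
      using orb_eq orb_X by blast
  qed
  ultimately show ?thesis by simp
qed simp

end

lemma invertible_mat_Units:
  fixes A :: "'a::comm_ring_1 mat"
  assumes A: "A \<in> carrier_mat n n" and "invertible_mat A"
  shows "A \<in> Units (ring_mat TYPE('a) n b)"
proof -
  obtain B where AB: "A * B = 1\<^sub>m n" and BA: "B * A = 1\<^sub>m (dim_row B)"
    using assms unfolding invertible_mat_def inverts_mat_def by auto
  have "B \<in> carrier_mat n n"
    using arg_cong[OF AB, of dim_col] arg_cong[OF BA, of dim_col] A by auto
  then show ?thesis
    using A AB BA unfolding Units_def ring_mat_simps by auto
qed

lemma funpow_mult_mat_vec:
  fixes A :: "'a::comm_ring_1 mat"
  assumes A: "A \<in> carrier_mat n n" and x: "x \<in> carrier_vec n"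
  shows "((*\<^sub>v) A ^^ t) x = A ^\<^sub>m t *\<^sub>v x"
proof (induct t)
  case (Suc t)
  then show ?case
    using assoc_mult_mat_vec[OF A pow_carrier_mat[OF A] x, of t]
    by (simp add: pow_mat_Suc_left[OF A] del: pow_mat.simps(2))
qed (use A x in simp)

text \<open>By \<open>pow_mat_eq_one_if_fixed_vector\<close>, every nonzero vector returns to itself under \<open>A\<close>
  exactly after multiples of the order of \<open>A\<close> in the group of units.\<close>

lemma pow_mat_card_invariant_set:
  fixes A :: "'a::field_gcd mat"
  assumes A: "A \<in> carrier_mat n n" "invertible_mat A" and irr: "irreducible (char_poly A)"
    and X: "finite X" "X \<subseteq> carrier_vec n - {0\<^sub>v n}" and AX: "\<And>x. x \<in> X \<Longrightarrow> A *\<^sub>v x \<in> X"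
  shows "A ^\<^sub>m card X = 1\<^sub>m n"
proof -
  let ?R = "ring_mat TYPE('a) n ()"
  interpret R: ring ?R by (rule ring_mat)
  interpret G: group "units_of ?R" by (rule R.units_group)
  have order: "A ^\<^sub>m t = 1\<^sub>m n \<longleftrightarrow> G.ord A dvd t" for t
    using G.pow_eq_id[of A t] invertible_mat_Units[OF A, of "()"]
    by (simp add: units_of_carrier units_of_one R.units_of_pow pow_mat_ring_pow[OF A(1), where b = "()"]
        ring_mat_simps)
  have "G.ord A dvd card X"
  proof (rule dvd_card_if_uniform_period)
    fix x t assume "x \<in> X"
    then have x: "x \<in> carrier_vec n" "x \<noteq> 0\<^sub>v n" using X(2) by auto
    show "((*\<^sub>v) A ^^ t) x = x \<longleftrightarrow> G.ord A dvd t"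
      unfolding funpow_mult_mat_vec[OF A(1) x(1)] order[symmetric]
      using pow_mat_eq_one_if_fixed_vector[OF A(1) irr x] x(1) by auto
  qed (use X(1) AX in auto)
  then show ?thesis using order by simp
qed

section \<open>Block systems of affine maps\<close>

lemma imprimitive_perm_if_compatible_equiv:
  assumes fin: "finite \<Omega>" and g: "inj_on g \<Omega>" "g ` \<Omega> \<subseteq> \<Omega>"
    and R: "equiv \<Omega> R" "\<And>x y. (x, y) \<in> R \<Longrightarrow> (g x, g y) \<in> R"
    and classes: "\<And>x. x \<in> \<Omega> \<Longrightarrow> card (R `` {x}) = m" and m: "1 < m" "m < card \<Omega>"
  shows "imprimitive_perm g \<Omega>"
proof -
  have R_sub: "R `` {x} \<subseteq> \<Omega>" for x
    using equiv_type[OF R(1)] by auto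
  have "g ` B \<in> \<Omega> // R" if "B \<in> \<Omega> // R" for B
  proof -
    obtain x where x: "x \<in> \<Omega>" and B: "B = R `` {x}"
      using \<open>B \<in> \<Omega> // R\<close> by (auto elim: quotientE)
    have "g ` B \<subseteq> R `` {g x}"
      unfolding B using R(2) by auto
    moreover have "card (g ` B) = card (R `` {g x})"
      using card_image[OF inj_on_subset[OF g(1) R_sub]] classes x g(2) B by auto
    ultimately have "g ` B = R `` {g x}"
      using card_subset_eq[OF finite_subset[OF R_sub fin]] by blast
    then show ?thesis
      using x g(2) by (auto intro: quotientI)
  qed
  moreover have "card B = m" if "B \<in> \<Omega> // R" for B
    using that classes by (auto elim: quotientE)
  ultimately show ?thesis
    unfolding imprimitive_perm_def using partition_on_quotient[OF R(1)] m by blast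
qed

lemma invariant_block_if_fixed_point:
  assumes P: "partition_on \<Omega> P" and gP: "\<forall>B\<in>P. g ` B \<in> P" and f: "f \<in> \<Omega>" "g f = f"
  obtains B where "B \<in> P" "f \<in> B" "g ` B = B"
proof -
  obtain B where B: "B \<in> P" "f \<in> B"
    using f(1) partition_onD1[OF P] by auto
  have "f \<in> g ` B \<inter> B"
    using B(2) f(2) by (metis IntI imageI)
  then have "g ` B = B"
    using disjointD[OF partition_onD2[OF P] gP[rule_format, OF B(1)] B(1)] by blast
  with B that show ?thesis by blast
qed

definition coset_rel :: "nat \<Rightarrow> 'a::group_add vec set \<Rightarrow> ('a vec \<times> 'a vec) set" where
  "coset_rel n W = {(x, y). x \<in> carrier_vec n \<and> y \<in> carrier_vec n \<and> x - y \<in> W}"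

context
  fixes n :: nat and W :: "'a::ab_group_add vec set"
  assumes W: "W \<subseteq> carrier_vec n" "0\<^sub>v n \<in> W" "\<And>x y. x \<in> W \<Longrightarrow> y \<in> W \<Longrightarrow> x - y \<in> W"
begin

lemma equiv_coset_rel: "equiv (carrier_vec n) (coset_rel n W)"
proof (rule equivI)
  show "coset_rel n W \<subseteq> carrier_vec n \<times> carrier_vec n"
    unfolding coset_rel_def by auto
  show "refl_on (carrier_vec n) (coset_rel n W)"
    unfolding coset_rel_def refl_on_def using W(2) by auto
  show "sym (coset_rel n W)"
  proof (rule symI)
    fix x y assume "(x, y) \<in> coset_rel n W"
    then have V: "x \<in> carrier_vec n" "y \<in> carrier_vec n" and "x - y \<in> W"
      unfolding coset_rel_def by auto
    then have "0\<^sub>v n - (x - y) \<in> W" using W(2,3) by blast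
    moreover have "0\<^sub>v n - (x - y) = y - x" using V by (intro eq_vecI) auto
    ultimately show "(y, x) \<in> coset_rel n W" unfolding coset_rel_def using V by auto
  qed
  show "trans (coset_rel n W)"
  proof (rule transI)
    fix x y z assume "(x, y) \<in> coset_rel n W" "(y, z) \<in> coset_rel n W"
    then have V: "x \<in> carrier_vec n" "y \<in> carrier_vec n" "z \<in> carrier_vec n"
      and "x - y \<in> W" "y - z \<in> W"
      unfolding coset_rel_def by auto
    then have "(x - y) - (0\<^sub>v n - (y - z)) \<in> W" using W(2,3) by blast
    moreover have "(x - y) - (0\<^sub>v n - (y - z)) = x - z" using V by (intro eq_vecI) auto
    ultimately show "(x, z) \<in> coset_rel n W" unfolding coset_rel_def using V by auto
  qed
qed

lemma card_coset_rel_class: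
  assumes x: "x \<in> carrier_vec n"
  shows "card (coset_rel n W `` {x}) = card W"
proof -
  have cancel: "x - (x - w) = w" if "w \<in> W" for w
    using x that W(1) by (intro eq_vecI) auto
  have "coset_rel n W `` {x} = (\<lambda>w. x - w) ` W"
  proof (intro equalityI subsetI)
    fix y assume "y \<in> coset_rel n W `` {x}"
    then have y: "y \<in> carrier_vec n" "x - y \<in> W" unfolding coset_rel_def by auto
    moreover have "y = x - (x - y)" using x y by (intro eq_vecI) auto
    ultimately show "y \<in> (\<lambda>w. x - w) ` W" by blast
  next
    fix y assume "y \<in> (\<lambda>w. x - w) ` W"
    then obtain w where "w \<in> W" "y = x - w" by blast
    then show "y \<in> coset_rel n W `` {x}" unfolding coset_rel_def using x W(1) cancel by auto
  qed
  moreover have "inj_on (\<lambda>w. x - w) W"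
  proof
    fix w w' assume "w \<in> W" "w' \<in> W" and eq: "x - w = x - w'"
    have "w = x - (x - w)" using cancel[OF \<open>w \<in> W\<close>] by simp
    also have "\<dots> = x - (x - w')" by (simp only: eq)
    also have "\<dots> = w'" by (rule cancel[OF \<open>w' \<in> W\<close>])
    finally show "w = w'" .
  qed
  ultimately show ?thesis by (simp add: card_image)
qed

end

lemma inj_on_mult_mat_vec:
  fixes A :: "'a::comm_ring_1 mat"
  assumes A: "A \<in> carrier_mat n n" and "invertible_mat A"
  shows "inj_on ((*\<^sub>v) A) (carrier_vec n)"
proof
  obtain B where B: "B \<in> carrier_mat n n" and BA: "B * A = 1\<^sub>m n"
    using invertible_mat_Units[OF assms, of "()"] unfolding Units_def ring_mat_simps by auto
  fix x y assume x: "x \<in> carrier_vec n" and y: "y \<in> carrier_vec n" and eq: "A *\<^sub>v x = A *\<^sub>v y"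
  have "x = B *\<^sub>v (A *\<^sub>v x)" using A B BA x by (simp flip: assoc_mult_mat_vec)
  also have "\<dots> = y" using A B BA y by (simp add: eq flip: assoc_mult_mat_vec)
  finally show "x = y" .
qed

lemma imprimitive_affine_if_invariant_subgroup:
  fixes A :: "'a::{comm_ring_1, finite} mat"
  assumes A: "A \<in> carrier_mat n n" "invertible_mat A" and e: "e \<in> carrier_vec n"
    and W: "W \<subseteq> carrier_vec n" "0\<^sub>v n \<in> W" "\<And>x y. x \<in> W \<Longrightarrow> y \<in> W \<Longrightarrow> x - y \<in> W"
      "\<And>x. x \<in> W \<Longrightarrow> A *\<^sub>v x \<in> W"
    and card: "1 < card W" "card W < card (carrier_vec n :: 'a vec set)"
  shows "imprimitive_perm (\<lambda>x. A *\<^sub>v x + e) (carrier_vec n)"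
proof (rule imprimitive_perm_if_compatible_equiv)
  let ?g = "\<lambda>x. A *\<^sub>v x + e"
  show "(?g x, ?g y) \<in> coset_rel n W" if "(x, y) \<in> coset_rel n W" for x y
  proof -
    have x: "x \<in> carrier_vec n" and y: "y \<in> carrier_vec n" and "x - y \<in> W"
      using that unfolding coset_rel_def by auto
    have "?g x - ?g y = A *\<^sub>v (x - y)"
      using A(1) x y e by (intro eq_vecI) (auto simp: mult_minus_distrib_mat_vec[OF A(1) x y])
    then show ?thesis
      unfolding coset_rel_def using A(1) x y e W(4)[OF \<open>x - y \<in> W\<close>] by auto
  qed
  show "inj_on ?g (carrier_vec n)"
  proof
    fix x y assume x: "x \<in> carrier_vec n" and y: "y \<in> carrier_vec n" and eq: "?g x = ?g y"
    have "A *\<^sub>v x = A *\<^sub>v y"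
    proof (rule eq_vecI)
      fix i assume "i < dim_vec (A *\<^sub>v y)"
      then show "(A *\<^sub>v x) $ i = (A *\<^sub>v y) $ i"
        using arg_cong[OF eq, of "\<lambda>v. v $ i"] A(1) e by simp
    qed (use A(1) in simp)
    then show "x = y" using inj_on_mult_mat_vec[OF A] x y by (auto dest: inj_onD)
  qed
qed (use A(1) e card equiv_coset_rel[OF W(1-3)] card_coset_rel_class[OF W(1-3)] in auto)

lemma affine_map_fixed_point:
  fixes A :: "'a::field mat"
  assumes A: "A \<in> carrier_mat n n" and e: "e \<in> carrier_vec n" and "\<not> eigenvalue A 1"
  obtains f where "f \<in> carrier_vec n" "A *\<^sub>v f + e = f"
proof -
  let ?M = "char_matrix A 1"
  have M: "?M \<in> carrier_mat n n" using A by simp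
  have "det ?M \<noteq> 0" using assms(3) eigenvalue_det[OF A] by simp
  from det_non_zero_imp_unit[OF M this, of "()"] obtain B
    where B: "B \<in> carrier_mat n n" and MB: "?M * B = 1\<^sub>m n"
    unfolding Units_def ring_mat_simps by auto
  define f where "f = B *\<^sub>v (- e)"
  have f: "f \<in> carrier_vec n" unfolding f_def using B e by simp
  have "?M *\<^sub>v f = - e"
    unfolding f_def using M B e MB by (simp flip: assoc_mult_mat_vec)
  moreover have "?M *\<^sub>v f = A *\<^sub>v f + (-1) \<cdot>\<^sub>v f"
    unfolding char_matrix_def using A f by (intro eq_vecI) (auto simp: add_scalar_prod_distrib[of _ n])
  ultimately have eq: "A *\<^sub>v f + (-1) \<cdot>\<^sub>v f = - e" by simp
  have "A *\<^sub>v f + e = f"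
  proof (rule eq_vecI)
    fix i assume "i < dim_vec f"
    with f have i: "i < n" by simp
    from arg_cong[OF eq, of "\<lambda>v. v $ i"] have "(A *\<^sub>v f) $ i - f $ i = - e $ i"
      using A f e i by simp
    then show "(A *\<^sub>v f + e) $ i = f $ i"
      using A e i by (simp add: diff_eq_eq)
  qed (use A e f in simp)
  with f that show ?thesis by blast
qed

lemma translated_invariant_block:
  fixes A :: "'a::comm_ring_1 mat"
  assumes A: "A \<in> carrier_mat n n" "invertible_mat A" and e: "e \<in> carrier_vec n"
    and B: "B \<subseteq> carrier_vec n" "f \<in> B" "(\<lambda>x. A *\<^sub>v x + e) ` B = B"
    and f: "A *\<^sub>v f + e = f"
  defines "X \<equiv> (\<lambda>y. y - f) ` B - {0\<^sub>v n}"
  shows "card X = card B - 1" and "X \<subseteq> carrier_vec n - {0\<^sub>v n}"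
    and "\<And>x. x \<in> X \<Longrightarrow> A *\<^sub>v x \<in> X"
proof -
  have fV: "f \<in> carrier_vec n" using B by auto
  have "inj_on (\<lambda>y. y - f) B"
  proof
    fix y y' assume "y \<in> B" "y' \<in> B" and eq: "y - f = y' - f"
    then have V: "y \<in> carrier_vec n" "y' \<in> carrier_vec n" using B(1) by auto
    show "y = y'"
    proof (rule eq_vecI)
      fix i assume "i < dim_vec y'"
      then show "y $ i = y' $ i"
        using arg_cong[OF eq, of "\<lambda>v. v $ i"] V fV by simp
    qed (use V in simp)
  qed
  moreover have "0\<^sub>v n \<in> (\<lambda>y. y - f) ` B"
    using B(2) fV by (intro image_eqI[where x = f]) auto
  ultimately show "card X = card B - 1"
    unfolding X_def by (simp add: card_image)
  show "X \<subseteq> carrier_vec n - {0\<^sub>v n}"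
    unfolding X_def using B(1) fV by auto
  fix x assume "x \<in> X"
  then obtain y where y: "y \<in> B" "x = y - f" and x0: "x \<noteq> 0\<^sub>v n"
    unfolding X_def by auto
  have yV: "y \<in> carrier_vec n" using y B(1) by auto
  have "A *\<^sub>v x = (A *\<^sub>v y + e) - f"
  proof (rule eq_vecI)
    fix i assume "i < dim_vec ((A *\<^sub>v y + e) - f)"
    then have i: "i < n" using fV by simp
    have "(A *\<^sub>v f) $ i = f $ i - e $ i"
      using arg_cong[OF f, of "\<lambda>v. v $ i"] i A(1) fV e by (simp add: eq_diff_eq)
    then show "(A *\<^sub>v x) $ i = ((A *\<^sub>v y + e) - f) $ i"
      unfolding y(2) mult_minus_distrib_mat_vec[OF A(1) yV fV] using i A(1) yV fV e
      by (simp add: algebra_simps)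
  qed (use A(1) yV fV in simp)
  moreover have "A *\<^sub>v y + e \<in> B" using B(3) y(1) by blast
  moreover have "A *\<^sub>v x \<noteq> 0\<^sub>v n"
  proof
    assume "A *\<^sub>v x = 0\<^sub>v n"
    then have "A *\<^sub>v x = A *\<^sub>v 0\<^sub>v n" using A(1) by simp
    then show False
      using inj_on_mult_mat_vec[OF A] x0 y(2) yV fV by (auto dest: inj_onD)
  qed
  ultimately show "A *\<^sub>v x \<in> X" unfolding X_def by auto
qed

lemma inj_on_vec_coeff: "inj_on (\<lambda>p :: 'a::zero poly. vec d (coeff p)) {p. degree p < d}"
proof
  fix p q :: "'a poly" assume p: "p \<in> {p. degree p < d}" and q: "q \<in> {p. degree p < d}"
    and eq: "vec d (coeff p) = vec d (coeff q)"
  show "p = q"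
  proof (rule poly_eqI)
    fix i show "coeff p i = coeff q i"
    proof (cases "i < d")
      case True
      then show ?thesis using arg_cong[OF eq, of "\<lambda>v. v $ i"] by simp
    next
      case False
      then show ?thesis using p q by (simp add: coeff_eq_0)
    qed
  qed
qed

lemma finite_degree_less: "finite {p :: 'a::{zero, finite} poly. degree p < d}"
  by (rule finite_imageD[OF finite_subset[OF _ finite_carrier_vec] inj_on_vec_coeff]) auto

lemma card_degree_less_le: "card {p :: 'a::{zero, finite} poly. degree p < d} \<le> CARD('a) ^ d"
proof -
  have "card {p :: 'a poly. degree p < d} \<le> card (carrier_vec d :: 'a vec set)"
    by (rule card_inj_on_le[OF inj_on_vec_coeff]) auto
  then show ?thesis by (simp add: card_carrier_vec)
qed

lemma card_cyclic_subspace_le: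
  fixes A :: "'a::{field, finite} mat"
  assumes A: "A \<in> carrier_mat n n" and v: "v \<in> carrier_vec n"
    and q: "0 < degree q" and qv: "poly_mat A q *\<^sub>v v = 0\<^sub>v n"
  shows "card (range (\<lambda>r. poly_mat A r *\<^sub>v v)) \<le> CARD('a) ^ degree q"
proof -
  have "poly_mat A r *\<^sub>v v \<in> (\<lambda>r. poly_mat A r *\<^sub>v v) ` {r. degree r < degree q}" for r
  proof -
    have "poly_mat A r = poly_mat A (r div q) * poly_mat A q + poly_mat A (r mod q)"
      using A by (metis div_mult_mod_eq poly_mat_add poly_mat_mult)
    then have "poly_mat A r *\<^sub>v v = (poly_mat A (r div q) * poly_mat A q) *\<^sub>v v + poly_mat A (r mod q) *\<^sub>v v"
      using add_mult_distrib_mat_vec[OF mult_carrier_mat[OF poly_mat_carrier[OF A] poly_mat_carrier[OF A]]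
          poly_mat_carrier[OF A] v] by simp
    also have "(poly_mat A (r div q) * poly_mat A q) *\<^sub>v v = 0\<^sub>v n"
      using A qv by (simp add: assoc_mult_mat_vec[OF poly_mat_carrier[OF A] poly_mat_carrier[OF A] v])
    finally have "poly_mat A r *\<^sub>v v = poly_mat A (r mod q) *\<^sub>v v"
      using mult_mat_vec_carrier[OF poly_mat_carrier[OF A] v] by simp
    moreover have "degree (r mod q) < degree q"
      using q by (cases "r mod q = 0") (auto intro: degree_mod_less')
    ultimately show ?thesis by blast
  qed
  then have "range (\<lambda>r. poly_mat A r *\<^sub>v v) = (\<lambda>r. poly_mat A r *\<^sub>v v) ` {r. degree r < degree q}"
    by blast
  then have "card (range (\<lambda>r. poly_mat A r *\<^sub>v v)) \<le> card {r :: 'a poly. degree r < degree q}"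
    by (simp add: card_image_le finite_degree_less)
  then show ?thesis
    using card_degree_less_le order_trans by blast
qed


lemma annihilated_vector_if_reducible_char_poly:
  fixes A :: "'a::field mat"
  assumes A: "A \<in> carrier_mat n n" and n: "1 \<le> n" and red: "\<not> irreducible (char_poly A)"
  obtains q v where "0 < degree q" "degree q < n" "v \<in> carrier_vec n" "v \<noteq> 0\<^sub>v n"
    "poly_mat A q *\<^sub>v v = 0\<^sub>v n"
proof -
  have deg: "degree (char_poly A) = n" and "char_poly A \<noteq> 0"
    using degree_monic_char_poly[OF A] by auto
  moreover have "\<not> is_unit (char_poly A)"
    using deg n by (simp add: is_unit_iff_degree[OF \<open>char_poly A \<noteq> 0\<close>])
  ultimately obtain f h where fh: "char_poly A = f * h" and f: "\<not> is_unit f" and h: "\<not> is_unit h"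
    using red unfolding irreducible_def by auto
  then have "f \<noteq> 0" "h \<noteq> 0" using \<open>char_poly A \<noteq> 0\<close> by auto
  then have degrees: "0 < degree f" "0 < degree h" "degree f + degree h = n"
    using f h fh deg by (auto simp: is_unit_iff_degree degree_mult_eq)
  have "poly_mat A f * poly_mat A h = 0\<^sub>m n n"
    using Cayley_Hamilton[OF A] fh by (simp add: poly_mat_mult[OF A])
  then have "det (poly_mat A f) * det (poly_mat A h) = 0"
    using det_mult[OF poly_mat_carrier[OF A] poly_mat_carrier[OF A], of f h] det_zero[of n] n by simp
  then obtain q where "q \<in> {f, h}" and "det (poly_mat A q) = 0" by auto
  moreover from this degrees have "0 < degree q" "degree q < n" by auto
  moreover obtain v where "v \<in> carrier_vec n" "v \<noteq> 0\<^sub>v n" "poly_mat A q *\<^sub>v v = 0\<^sub>v n"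
    using calculation(2) det_0_iff_vec_prod_zero_field[OF poly_mat_carrier[OF A]] by blast
  ultimately show ?thesis using that by blast
qed

lemma cyclic_subspace:
  fixes A :: "'a::comm_ring_1 mat"
  assumes A: "A \<in> carrier_mat n n" and v: "v \<in> carrier_vec n"
  defines "W \<equiv> range (\<lambda>r. poly_mat A r *\<^sub>v v)"
  shows "W \<subseteq> carrier_vec n" and "v \<in> W" and "0\<^sub>v n \<in> W"
    and "\<And>x y. x \<in> W \<Longrightarrow> y \<in> W \<Longrightarrow> x - y \<in> W"
    and "\<And>x. x \<in> W \<Longrightarrow> A *\<^sub>v x \<in> W"
proof -
  show "W \<subseteq> carrier_vec n"
    unfolding W_def using mult_mat_vec_carrier[OF poly_mat_carrier[OF A] v] by auto
  have "v = poly_mat A 1 *\<^sub>v v"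
    using A v by (simp add: poly_mat_1)
  then show "v \<in> W"
    unfolding W_def by (rule range_eqI)
  show diff: "x - y \<in> W" if xy: "x \<in> W" "y \<in> W" for x y
  proof -
    obtain r s where "x = poly_mat A r *\<^sub>v v" "y = poly_mat A s *\<^sub>v v"
      using xy unfolding W_def by auto
    then have "x - y = poly_mat A (r - s) *\<^sub>v v"
      by (simp add: poly_mat_diff[OF A]
          minus_mult_distrib_mat_vec[OF poly_mat_carrier[OF A] poly_mat_carrier[OF A] v])
    then show ?thesis unfolding W_def by (rule range_eqI)
  qed
  show "0\<^sub>v n \<in> W"
    using diff[OF \<open>v \<in> W\<close> \<open>v \<in> W\<close>] v by simp
  show "A *\<^sub>v x \<in> W" if x: "x \<in> W" for x
  proof -
    obtain r where r: "x = poly_mat A r *\<^sub>v v"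
      using x unfolding W_def by auto
    have "poly_mat A ([:0, 1:] * r) *\<^sub>v v = A *\<^sub>v x"
      unfolding poly_mat_mult[OF A] poly_mat_X[OF A] r
      by (rule assoc_mult_mat_vec[OF A poly_mat_carrier[OF A] v])
    then show ?thesis unfolding W_def by (metis rangeI)
  qed
qed

lemma imprimitive_affine_if_reducible_char_poly:
  fixes A :: "'a::{field, finite} mat"
  assumes n: "1 \<le> n" and A: "A \<in> carrier_mat n n" "invertible_mat A" and e: "e \<in> carrier_vec n"
    and red: "\<not> irreducible (char_poly A)"
  shows "imprimitive_perm (\<lambda>x. A *\<^sub>v x + e) (carrier_vec n)"
proof -
  obtain q v where q: "0 < degree q" "degree q < n" and v: "v \<in> carrier_vec n" "v \<noteq> 0\<^sub>v n"
    and qv: "poly_mat A q *\<^sub>v v = 0\<^sub>v n"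
    using annihilated_vector_if_reducible_char_poly[OF A(1) n red] .
  define W where "W = range (\<lambda>r. poly_mat A r *\<^sub>v v)"
  note W = cyclic_subspace[OF A(1) v(1), folded W_def]
  have "card {0\<^sub>v n, v} \<le> card W"
    using W(2,3) by (intro card_mono finite_subset[OF W(1)]) auto
  then have "1 < card W" using v(2) by simp
  moreover have "card W < card (carrier_vec n :: 'a vec set)"
  proof -
    have "card W \<le> CARD('a) ^ degree q"
      unfolding W_def by (rule card_cyclic_subspace_le[OF A(1) v(1) q(1) qv])
    also have "\<dots> < CARD('a) ^ n"
      using q(2) card_mono[of "UNIV :: 'a set" "{0, 1}"] by (intro power_strict_increasing) auto
    finally show ?thesis by (simp add: card_carrier_vec)
  qed
  ultimately show ?thesis
    using imprimitive_affine_if_invariant_subgroup[OF A e W(1,3-5)] by blast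
qed

lemma block_size_dvd_card:
  assumes "finite \<Omega>" "partition_on \<Omega> P" "\<forall>B\<in>P. card B = m"
  shows "m dvd card \<Omega>"
proof -
  have "m dvd card (\<Union>P)"
    using assms disjointD[OF partition_onD2[OF assms(2)]] partition_onD1[OF assms(2), symmetric]
    by (intro dvd_partition) auto
  then show ?thesis
    using partition_onD1[OF assms(2)] by simp
qed

lemma primitive_affine_if_irreducible_char_poly:
  fixes A :: "'p::prime_card mod_ring mat"
  assumes A: "A \<in> carrier_mat n n" "invertible_mat A" and e: "e \<in> carrier_vec n"
    and irr: "irreducible (char_poly A)"
  shows "\<not> imprimitive_perm (\<lambda>x. A *\<^sub>v x + e) (carrier_vec n)"
proof
  let ?V = "carrier_vec n :: 'p mod_ring vec set"
  let ?g = "\<lambda>x. A *\<^sub>v x + e"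
  assume "imprimitive_perm ?g ?V"
  then obtain P m where P: "partition_on ?V P" and card_P: "\<forall>B\<in>P. card B = m"
    and m: "1 < m" "m < card ?V" and gP: "\<forall>B\<in>P. ?g ` B \<in> P"
    unfolding imprimitive_perm_def by blast
  obtain j where j: "m = CARD('p) ^ j"
    using block_size_dvd_card[OF finite_carrier_vec P card_P] divides_primepow_nat[OF prime_card]
    by (auto simp: card_carrier_vec)
  have "1 \<le> j"
    using m(1) j by (cases j) auto
  have "j < n"
    using m(2) j prime_gt_1_nat[OF prime_card[where 'a = 'p]]
    by (auto simp: card_carrier_vec dest: power_less_imp_less_exp)
  have "\<not> eigenvalue A 1"
    using no_eigenvalue_if_irreducible_char_poly[OF A(1) irr] \<open>1 \<le> j\<close> \<open>j < n\<close> by simp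
  then obtain f where f: "f \<in> ?V" "?g f = f"
    using affine_map_fixed_point[OF A(1) e] by blast
  then obtain B where B: "B \<in> P" "f \<in> B" "?g ` B = B"
    using invariant_block_if_fixed_point[OF P gP] by blast
  have "B \<subseteq> ?V" using B(1) partition_onD1[OF P] by auto
  note X = translated_invariant_block[OF A e this B(2,3) f(2)]
  have "A ^\<^sub>m (m - 1) = 1\<^sub>m n"
    using pow_mat_card_invariant_set[OF A irr finite_subset[OF X(2)] X(2,3)] X(1) card_P B(1) by auto
  then have "A ^\<^sub>m m = A"
    using pow_mat_add[OF A(1), of "m - 1" 1] m A(1) by simp
  then have "poly_mat A ([:0, 1:] ^ m - [:0, 1:]) = 0\<^sub>m n n"
    using A(1) by (simp only: poly_mat_diff poly_mat_power poly_mat_X) (auto intro!: eq_matI)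
  then have "char_poly A dvd [:0, 1:] ^ CARD('p) ^ j - [:0, 1:]"
    using char_poly_dvd_if_poly_mat_eq_0[OF A(1) irr] \<open>j < n\<close> j by simp
  moreover have "monom 1 1 = [:0, 1 :: 'p mod_ring:]"
    by (simp add: monom_Suc)
  ultimately show False
    using degree_divisor2[OF irr _ \<open>1 \<le> j\<close>] degree_monic_char_poly[OF A(1)] \<open>j < n\<close> by auto
qed

theorem mainTheorem5:
  fixes A :: "'p::prime_card mod_ring mat" and e :: "'p mod_ring vec" and k :: nat
  assumes "k \<ge> 1"
    and "A \<in> carrier_mat k k" and "invertible_mat A"
    and "e \<in> carrier_vec k"
  shows "imprimitive_perm (\<lambda>x. A *\<^sub>v x + e) (carrier_vec k) \<longleftrightarrow> \<not> irreducible (char_poly A)"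
  using primitive_affine_if_irreducible_char_poly[OF assms(2-4)]
    imprimitive_affine_if_reducible_char_poly[OF assms] by blast

end
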